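(* Let $\beta_\bullet\in\{\beta,\beta_v\}$ and let $\rightsquigarrow_U$ be the unbiased iteration of the associated surface reduction (as in the context). For all terms $U,N$: if $U\to_{\beta_\bullet}N$ and not $U\rightsquigarrow_UN$, then $N$ is not $\beta_\bullet$-normal.
   Context: Terms $\Lambda_{\mathcal O}$: $M::=x\mid\lambda x.M\mid MM\mid\mathsf{op}(M,\dots,M)$ with $\mathsf{op}$ in a (possibly empty) set $\mathcal O$ of operator symbols with fixed arities; values $V::=x\mid\lambda x.M$. Contexts $C::=[\,]\mid MC\mid CM\mid\lambda x.C\mid\mathsf{op}(M,\dots,C,\dots,M)$. Rules $(\lambda x.M)N\mapsto_\beta M\{N/x\}$, $(\lambda x.M)V\mapsto_{\beta_v}M\{V/x\}$ ($V$ a value); $\to_{\beta_\bullet}$ is the closure under all contexts. Surface reduction $\to_s$: for $\beta$, closure of $\beta$ under head contexts $H::=[\,]\mid\lambda x.H\mid HM$; for $\beta_v$, closure of $\beta_v$ under weak contexts $W::=[\,]\mid WM\mid MW$. $\rightsquigarrow_U$ is defined inductively: if $M\to_sM'$ then $M\rightsquigarrow_UM'$; if $M$ is $\to_s$-normal: $\lambda x.P\rightsquigarrow_U\lambda x.P'$ if $P\rightsquigarrow_UP'$; $PQ\rightsquigarrow_UP'Q$ if $P\rightsquigarrow_UP'$; $PQ\rightsquigarrow_UPQ'$ if $Q\rightsquigarrow_UQ'$; $\mathsf{op}(\dots,P_i,\dots)\rightsquigarrow_U\mathsf{op}(\dots,P_i',\dots)$ if $P_i\rightsquigarrow_UP_i'$.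 *)

theory Defs
  imports Main
begin

text \<open>Terms of the lambda calculus with operators, in de Bruijn notation
(terms up to alpha-equivalence). Operator symbols have type 'o; arities
are given by a function ar.\<close>

datatype 'o trm = Var nat | Lam "'o trm" | App "'o trm" "'o trm" | Op 'o "'o trm list"

fun wf_trm :: "('o \<Rightarrow> nat) \<Rightarrow> 'o trm \<Rightarrow> bool" where
  "wf_trm ar (Var i) = True"
| "wf_trm ar (Lam t) = wf_trm ar t"
| "wf_trm ar (App s t) = (wf_trm ar s \<and> wf_trm ar t)"
| "wf_trm ar (Op f ts) = (length ts = ar f \<and> (\<forall>t\<in>set ts. wf_trm ar t))"

fun lift :: "nat \<Rightarrow> 'o trm \<Rightarrow> 'o trm" where
  "lift k (Var i) = (if i < k then Var i else Var (Suc i))"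
| "lift k (Lam t) = Lam (lift (Suc k) t)"
| "lift k (App s t) = App (lift k s) (lift k t)"
| "lift k (Op f ts) = Op f (map (lift k) ts)"

fun subst :: "'o trm \<Rightarrow> nat \<Rightarrow> 'o trm \<Rightarrow> 'o trm" where
  "subst (Var i) k s = (if i < k then Var i else if i = k then s else Var (i - 1))"
| "subst (Lam t) k s = Lam (subst t (Suc k) (lift 0 s))"
| "subst (App t u) k s = App (subst t k s) (subst u k s)"
| "subst (Op f ts) k s = Op f (map (\<lambda>t. subst t k s) ts)"

fun is_val :: "'o trm \<Rightarrow> bool" where
  "is_val (Var _) = True"
| "is_val (Lam _) = True"
| "is_val _ = False"

datatype calc = Beta | BetaV

inductive root :: "calc \<Rightarrow> 'o trm \<Rightarrow> 'o trm \<Rightarrow> bool" where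
  rbeta: "root Beta (App (Lam M) N) (subst M 0 N)"
| rbetav: "is_val V \<Longrightarrow> root BetaV (App (Lam M) V) (subst M 0 V)"

inductive step :: "calc \<Rightarrow> 'o trm \<Rightarrow> 'o trm \<Rightarrow> bool" where
  s_root: "root b M M' \<Longrightarrow> step b M M'"
| s_lam: "step b M M' \<Longrightarrow> step b (Lam M) (Lam M')"
| s_appL: "step b M M' \<Longrightarrow> step b (App M N) (App M' N)"
| s_appR: "step b N N' \<Longrightarrow> step b (App M N) (App M N')"
| s_op: "i < length ts \<Longrightarrow> step b (ts ! i) t' \<Longrightarrow> step b (Op f ts) (Op f (ts[i := t']))"

definition normal :: "calc \<Rightarrow> 'o trm \<Rightarrow> bool" where
  "normal b M \<longleftrightarrow> \<not> (\<exists>N. step b M N)"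

text \<open>Surface reduction: beta under head contexts H ::= [] | \<lambda>x.H | H M;
 beta_v under weak contexts W ::= [] | W M | M W.\<close>
inductive sred :: "calc \<Rightarrow> 'o trm \<Rightarrow> 'o trm \<Rightarrow> bool" where
  sr_root: "root b M M' \<Longrightarrow> sred b M M'"
| sr_lam: "sred Beta M M' \<Longrightarrow> sred Beta (Lam M) (Lam M')"
| sr_appL: "sred b M M' \<Longrightarrow> sred b (App M N) (App M' N)"
| sr_appR: "sred BetaV N N' \<Longrightarrow> sred BetaV (App M N) (App M N')"

definition snormal :: "calc \<Rightarrow> 'o trm \<Rightarrow> bool" where
  "snormal b M \<longleftrightarrow> \<not> (\<exists>N. sred b M N)"

inductive ured :: "calc \<Rightarrow> 'o trm \<Rightarrow> 'o trm \<Rightarrow> bool" where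
  u_surf: "sred b M M' \<Longrightarrow> ured b M M'"
| u_lam: "snormal b (Lam P) \<Longrightarrow> ured b P P' \<Longrightarrow> ured b (Lam P) (Lam P')"
| u_appL: "snormal b (App P Q) \<Longrightarrow> ured b P P' \<Longrightarrow> ured b (App P Q) (App P' Q)"
| u_appR: "snormal b (App P Q) \<Longrightarrow> ured b Q Q' \<Longrightarrow> ured b (App P Q) (App P Q')"
| u_op: "snormal b (Op f ts) \<Longrightarrow> i < length ts \<Longrightarrow> ured b (ts ! i) t'
          \<Longrightarrow> ured b (Op f ts) (Op f (ts[i := t']))"

end

theory Submission
  imports Defs
begin

text \<open>If U has a
surface redex and the step is not surface, that redex survives it (an abstraction
stays an abstraction, a value stays a value), so N is not even surface normal. If
U is surface normal, the step is an unbiased step of the subterm in which it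
happens, and one concludes by induction on the step.\<close>

lemma sred_imp_step: "sred b M N \<Longrightarrow> step b M N"
  by (induction rule: sred.induct) (auto intro: step.intros)

lemma not_snormal_imp_not_normal: "\<not> snormal b M \<Longrightarrow> \<not> normal b M"
  by (auto simp: snormal_def normal_def dest: sred_imp_step)

lemma snormal_Op: "snormal b (Op f ts)"
  by (auto simp: snormal_def elim: sred.cases root.cases)

lemma step_LamE:
  assumes "step b (Lam M) L"
  obtains M' where "L = Lam M'"
  using assms by (auto elim: step.cases root.cases)

lemma is_val_step: "is_val Q \<Longrightarrow> step b Q Q' \<Longrightarrow> is_val Q'"
  by (cases Q) (auto elim: step.cases root.cases step_LamE)

lemma root_step_root_or_not_snormal:
  assumes "root b M X" and "step b M N"
  shows "root b M N \<or> \<not> snormal b N"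
proof -
  from \<open>root b M X\<close> obtain P Q where M: "M = App (Lam P) Q"
    and val: "b = BetaV \<Longrightarrow> is_val Q" by (auto elim: root.cases)
  have "\<not> snormal b N" if "N = App (Lam P') Q'" and "b = BetaV \<Longrightarrow> is_val Q'" for P' Q'
    using that by (cases b) (auto simp: snormal_def intro: sred.intros root.intros)
  with \<open>step b M N\<close> val show ?thesis
    unfolding M by (cases rule: step.cases) (auto elim: step_LamE dest: is_val_step)
qed

lemma sred_step_sred_or_not_snormal:
  "sred b U X \<Longrightarrow> step b U N \<Longrightarrow> sred b U N \<or> \<not> snormal b N"
proof (induction arbitrary: N rule: sred.induct)
  case (sr_root b M M')
  then show ?case using root_step_root_or_not_snormal by (blast intro: sred.intros)
next
  case (sr_lam M M')
  from \<open>step Beta (Lam M) N\<close> obtain A where "N = Lam A" "step Beta M A"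
    by (auto elim: step.cases root.cases)
  with sr_lam.IH show ?case by (auto simp: snormal_def intro: sred.intros)
next
  case (sr_appL b M M' Q)
  from \<open>step b (App M Q) N\<close> show ?case
  proof (cases rule: step.cases)
    case (s_appL A)
    with sr_appL.IH show ?thesis by (auto simp: snormal_def intro: sred.intros)
  next
    case (s_appR Q')
    with sr_appL.hyps show ?thesis by (auto simp: snormal_def intro: sred.intros)
  qed (auto intro: sred.intros)
next
  case (sr_appR Q Q' M)
  from \<open>step BetaV (App M Q) N\<close> show ?case
  proof (cases rule: step.cases)
    case (s_appR A)
    with sr_appR.IH show ?thesis by (auto simp: snormal_def intro: sred.intros)
  next
    case (s_appL M')
    with sr_appR.hyps show ?thesis by (auto simp: snormal_def intro: sred.intros)
  qed (auto intro: sred.intros)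
qed

lemma step_not_snormal_ured_or_not_normal:
  assumes "\<not> snormal b U" and "step b U N"
  shows "ured b U N \<or> \<not> normal b N"
proof -
  from assms(1) obtain X where "sred b U X" by (auto simp: snormal_def)
  with assms(2) show ?thesis
    by (auto dest: sred_step_sred_or_not_snormal not_snormal_imp_not_normal intro: ured.intros)
qed

lemma step_ured_or_not_normal: "step b U N \<Longrightarrow> ured b U N \<or> \<not> normal b N"
proof (induction rule: step.induct)
  case (s_root b M M')
  then show ?case by (auto intro: sred.intros ured.intros)
next
  case (s_lam b M M')
  show ?case
  proof (cases "snormal b (Lam M)")
    case True
    with s_lam.IH show ?thesis by (auto simp: normal_def intro: ured.intros step.intros)
  next
    case False
    from step.s_lam[OF s_lam.hyps] show ?thesis by (rule step_not_snormal_ured_or_not_normal[OF False])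
  qed
next
  case (s_appL b M M' Q)
  show ?case
  proof (cases "snormal b (App M Q)")
    case True
    with s_appL.IH show ?thesis by (auto simp: normal_def intro: ured.intros step.intros)
  next
    case False
    from step.s_appL[OF s_appL.hyps] show ?thesis by (rule step_not_snormal_ured_or_not_normal[OF False])
  qed
next
  case (s_appR b Q Q' M)
  show ?case
  proof (cases "snormal b (App M Q)")
    case True
    with s_appR.IH show ?thesis by (auto simp: normal_def intro: ured.intros step.intros)
  next
    case False
    from step.s_appR[OF s_appR.hyps] show ?thesis by (rule step_not_snormal_ured_or_not_normal[OF False])
  qed
next
  case (s_op i ts b t' f)
  from s_op.IH show ?case
  proof
    assume "ured b (ts ! i) t'"
    with s_op.hyps(1) show ?thesis by (blast intro: ured.u_op snormal_Op)
  next
    assume "\<not> normal b t'"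
    then obtain Y where "step b t' Y" by (auto simp: normal_def)
    with s_op.hyps(1) have "step b (Op f (ts[i := t'])) (Op f (ts[i := t', i := Y]))"
      by (intro step.s_op) auto
    then show ?thesis by (auto simp: normal_def)
  qed
qed

theorem mainTheorem13:
  fixes b :: calc and ar :: "'o \<Rightarrow> nat" and U N :: "'o trm"
  assumes "wf_trm ar U"
    and "step b U N"
    and "\<not> ured b U N"
  shows "\<not> normal b N"
  using step_ured_or_not_normal assms(2,3) by blast

end
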